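(* Let $J$ be a Jordan algebra with unit element $1$ over a field $F$ of characteristic $\neq 2,3$, and let $d$ be a derivation with invertible values of $J$. Let $M$ be the sum of all ideals of $J$ contained in $\ker(d)$. Then $M$ is the largest proper ideal of $J$ (it contains every proper ideal of $J$), the map $\bar d: J/M \to J/M$, $\bar d(j+M) = d(j)+M$, is a well-defined derivation with invertible values of $J/M$, and $J/M$ is a simple Jordan algebra (its only ideals are $0$ and $J/M$).
   Context: A Jordan algebra is a commutative algebra satisfying $(x^2,y,x)=0$, where $(a,b,c)=(ab)c-a(bc)$. In a Jordan algebra $J$ with unit $1$, an element $x$ is invertible if there exists $y \in J$ with $xy = 1$ and $x^2 y = x$. A derivation with invertible values of $J$ is a nonzero derivation $d$ of $J$ such that for every $x \in J$, $d(x)$ is either invertible or equal to $0$. *)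

theory Defs
  imports Main
begin

record ('f, 'a) alg =
  carrier :: "'a set"
  add :: "'a \<Rightarrow> 'a \<Rightarrow> 'a"
  zero :: "'a"
  neg :: "'a \<Rightarrow> 'a"
  smul :: "'f \<Rightarrow> 'a \<Rightarrow> 'a"
  mul :: "'a \<Rightarrow> 'a \<Rightarrow> 'a"
  one :: "'a"

definition algebra_over :: "('f::field, 'a) alg \<Rightarrow> bool" where
  "algebra_over A \<longleftrightarrow>
     zero A \<in> carrier A \<and> one A \<in> carrier A \<and>
     (\<forall>x\<in>carrier A. \<forall>y\<in>carrier A. add A x y \<in> carrier A \<and> mul A x y \<in> carrier A) \<and>
     (\<forall>x\<in>carrier A. neg A x \<in> carrier A) \<and>
     (\<forall>c. \<forall>x\<in>carrier A. smul A c x \<in> carrier A) \<and>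
     (\<forall>x\<in>carrier A. \<forall>y\<in>carrier A. \<forall>z\<in>carrier A. add A (add A x y) z = add A x (add A y z)) \<and>
     (\<forall>x\<in>carrier A. \<forall>y\<in>carrier A. add A x y = add A y x) \<and>
     (\<forall>x\<in>carrier A. add A (zero A) x = x) \<and>
     (\<forall>x\<in>carrier A. add A (neg A x) x = zero A) \<and>
     (\<forall>a. \<forall>x\<in>carrier A. \<forall>y\<in>carrier A. smul A a (add A x y) = add A (smul A a x) (smul A a y)) \<and>
     (\<forall>a b. \<forall>x\<in>carrier A. smul A (a + b) x = add A (smul A a x) (smul A b x)) \<and>
     (\<forall>a b. \<forall>x\<in>carrier A. smul A a (smul A b x) = smul A (a * b) x) \<and>
     (\<forall>x\<in>carrier A. smul A 1 x = x) \<and>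
     (\<forall>x\<in>carrier A. \<forall>y\<in>carrier A. \<forall>z\<in>carrier A.
        mul A (add A x y) z = add A (mul A x z) (mul A y z) \<and>
        mul A x (add A y z) = add A (mul A x y) (mul A x z)) \<and>
     (\<forall>a. \<forall>x\<in>carrier A. \<forall>y\<in>carrier A.
        mul A (smul A a x) y = smul A a (mul A x y) \<and> mul A x (smul A a y) = smul A a (mul A x y))"

definition unital_jordan_algebra :: "('f::field, 'a) alg \<Rightarrow> bool" where
  "unital_jordan_algebra A \<longleftrightarrow> algebra_over A \<and>
     (\<forall>x\<in>carrier A. \<forall>y\<in>carrier A. mul A x y = mul A y x) \<and>
     (\<forall>x\<in>carrier A. \<forall>y\<in>carrier A.
        mul A (mul A (mul A x x) y) x = mul A (mul A x x) (mul A y x)) \<and>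
     (\<forall>x\<in>carrier A. mul A (one A) x = x)"

definition ideal :: "('f::field, 'a) alg \<Rightarrow> 'a set \<Rightarrow> bool" where
  "ideal A I \<longleftrightarrow> I \<subseteq> carrier A \<and> zero A \<in> I \<and>
     (\<forall>x\<in>I. \<forall>y\<in>I. add A x y \<in> I) \<and>
     (\<forall>c. \<forall>x\<in>I. smul A c x \<in> I) \<and>
     (\<forall>x\<in>I. \<forall>y\<in>carrier A. mul A x y \<in> I \<and> mul A y x \<in> I)"

definition invertible :: "('f::field, 'a) alg \<Rightarrow> 'a \<Rightarrow> bool" where
  "invertible A x \<longleftrightarrow> x \<in> carrier A \<and>
     (\<exists>y\<in>carrier A. mul A x y = one A \<and> mul A (mul A x x) y = x)"

definition derivation :: "('f::field, 'a) alg \<Rightarrow> ('a \<Rightarrow> 'a) \<Rightarrow> bool" where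
  "derivation A d \<longleftrightarrow>
     (\<forall>x\<in>carrier A. d x \<in> carrier A) \<and>
     (\<forall>x\<in>carrier A. \<forall>y\<in>carrier A. d (add A x y) = add A (d x) (d y)) \<and>
     (\<forall>c. \<forall>x\<in>carrier A. d (smul A c x) = smul A c (d x)) \<and>
     (\<forall>x\<in>carrier A. \<forall>y\<in>carrier A. d (mul A x y) = add A (mul A (d x) y) (mul A x (d y)))"

definition derivation_inv_values :: "('f::field, 'a) alg \<Rightarrow> ('a \<Rightarrow> 'a) \<Rightarrow> bool" where
  "derivation_inv_values A d \<longleftrightarrow> derivation A d \<and>
     (\<exists>x\<in>carrier A. d x \<noteq> zero A) \<and>
     (\<forall>x\<in>carrier A. invertible A (d x) \<or> d x = zero A)"

definition ker :: "('f, 'a) alg \<Rightarrow> ('a \<Rightarrow> 'a) \<Rightarrow> 'a set" where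
  "ker A d = {x \<in> carrier A. d x = zero A}"

inductive_set ideal_sum :: "('f, 'a) alg \<Rightarrow> 'a set set \<Rightarrow> 'a set"
  for A :: "('f, 'a) alg" and S :: "'a set set" where
  zero_in: "zero A \<in> ideal_sum A S"
| add_in: "I \<in> S \<Longrightarrow> x \<in> I \<Longrightarrow> y \<in> ideal_sum A S \<Longrightarrow> add A x y \<in> ideal_sum A S"

definition simple_algebra :: "('f::field, 'a) alg \<Rightarrow> bool" where
  "simple_algebra A \<longleftrightarrow> carrier A \<noteq> {zero A} \<and>
     (\<forall>I. ideal A I \<longrightarrow> I = {zero A} \<or> I = carrier A)"

text \<open>Quotient algebra by a subset M (meaningful when M is an ideal): cosets,
  operations computed on chosen representatives.\<close>
definition coset :: "('f, 'a) alg \<Rightarrow> 'a set \<Rightarrow> 'a \<Rightarrow> 'a set" where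
  "coset A M a = {add A a m | m. m \<in> M}"

definition rep :: "'a set \<Rightarrow> 'a" where
  "rep X = (SOME x. x \<in> X)"

definition quot_alg :: "('f, 'a) alg \<Rightarrow> 'a set \<Rightarrow> ('f, 'a set) alg" where
  "quot_alg A M =
    \<lparr> carrier = coset A M ` carrier A,
      add = (\<lambda>X Y. coset A M (add A (rep X) (rep Y))),
      zero = coset A M (zero A),
      neg = (\<lambda>X. coset A M (neg A (rep X))),
      smul = (\<lambda>c X. coset A M (smul A c (rep X))),
      mul = (\<lambda>X Y. coset A M (mul A (rep X) (rep Y))),
      one = coset A M (one A) \<rparr>"

definition quot_map :: "('f, 'a) alg \<Rightarrow> 'a set \<Rightarrow> ('a \<Rightarrow> 'a) \<Rightarrow> 'a set \<Rightarrow> 'a set" where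
  "quot_map A M d = (\<lambda>X. coset A M (d (rep X)))"

end

theory Submission
  imports Defs
begin

text \<open>
  Neither the Jordan identity nor the hypothesis \<open>3 \<noteq> 0\<close> plays a role; the Jordan identity
  merely passes to the quotient. In a commutative unital algebra over a field of characteristic \<open>\<noteq> 2\<close>, a derivation \<open>d\<close> with invertible values kills every proper ideal \<open>I\<close>:
  for \<open>x \<in> I\<close> with \<open>a = d x\<close>, the element \<open>d (x\<^sup>2) = 2 x a\<close> lies in \<open>I\<close>, hence is not invertible,
  hence vanishes; so \<open>x a = 0\<close>, and applying \<open>d\<close> gives \<open>a\<^sup>2 = - (d a) x \<in> I\<close>. If \<open>a\<close> were
  invertible, \<open>a = a\<^sup>2 y\<close> would lie in \<open>I\<close>. Consequently the proper ideals are exactly the ideals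
  inside \<open>ker d\<close>, their sum \<open>M\<close> is the largest proper ideal, \<open>J/M\<close> is simple by the correspondence
  of ideals, and \<open>d\<close> descends to \<open>J/M\<close> because it vanishes on \<open>M\<close>.
\<close>

locale nonassoc_algebra =
  fixes A :: "('f::field, 'a) alg"
  assumes algebra_over: "algebra_over A"
begin

lemma zero_closed [simp]: "zero A \<in> carrier A"
  and one_closed [simp]: "one A \<in> carrier A"
  and add_closed [simp]: "x \<in> carrier A \<Longrightarrow> y \<in> carrier A \<Longrightarrow> add A x y \<in> carrier A"
  and mul_closed [simp]: "x \<in> carrier A \<Longrightarrow> y \<in> carrier A \<Longrightarrow> mul A x y \<in> carrier A"
  and neg_closed [simp]: "x \<in> carrier A \<Longrightarrow> neg A x \<in> carrier A"
  and smul_closed [simp]: "x \<in> carrier A \<Longrightarrow> smul A c x \<in> carrier A"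
  and add_assoc: "x \<in> carrier A \<Longrightarrow> y \<in> carrier A \<Longrightarrow> z \<in> carrier A \<Longrightarrow>
    add A (add A x y) z = add A x (add A y z)"
  and add_commute: "x \<in> carrier A \<Longrightarrow> y \<in> carrier A \<Longrightarrow> add A x y = add A y x"
  and add_zero_left [simp]: "x \<in> carrier A \<Longrightarrow> add A (zero A) x = x"
  and add_neg_left [simp]: "x \<in> carrier A \<Longrightarrow> add A (neg A x) x = zero A"
  and smul_add_distrib: "x \<in> carrier A \<Longrightarrow> y \<in> carrier A \<Longrightarrow>
    smul A c (add A x y) = add A (smul A c x) (smul A c y)"
  and add_smul_distrib: "x \<in> carrier A \<Longrightarrow> smul A (a + b) x = add A (smul A a x) (smul A b x)"
  and smul_smul [simp]: "x \<in> carrier A \<Longrightarrow> smul A a (smul A b x) = smul A (a * b) x"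
  and smul_one [simp]: "x \<in> carrier A \<Longrightarrow> smul A 1 x = x"
  and distrib_right: "x \<in> carrier A \<Longrightarrow> y \<in> carrier A \<Longrightarrow> z \<in> carrier A \<Longrightarrow>
    mul A (add A x y) z = add A (mul A x z) (mul A y z)"
  and distrib_left: "x \<in> carrier A \<Longrightarrow> y \<in> carrier A \<Longrightarrow> z \<in> carrier A \<Longrightarrow>
    mul A x (add A y z) = add A (mul A x y) (mul A x z)"
  and mul_smul_left: "x \<in> carrier A \<Longrightarrow> y \<in> carrier A \<Longrightarrow> mul A (smul A a x) y = smul A a (mul A x y)"
  and mul_smul_right: "x \<in> carrier A \<Longrightarrow> y \<in> carrier A \<Longrightarrow> mul A x (smul A a y) = smul A a (mul A x y)"
  using algebra_over unfolding algebra_over_def by metis+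

lemma add_zero_right [simp]: "x \<in> carrier A \<Longrightarrow> add A x (zero A) = x"
  by (metis add_commute add_zero_left zero_closed)

lemma add_neg_right [simp]: "x \<in> carrier A \<Longrightarrow> add A x (neg A x) = zero A"
  by (metis add_commute add_neg_left neg_closed)

lemma add_left_cancel:
  assumes "x \<in> carrier A" "y \<in> carrier A" "z \<in> carrier A" and "add A x y = add A x z"
  shows "y = z"
proof -
  have "y = add A (neg A x) (add A x y)" using assms(1,2) by (simp flip: add_assoc)
  also have "\<dots> = add A (neg A x) (add A x z)" using assms(4) by simp
  also have "\<dots> = z" using assms(1,3) by (simp flip: add_assoc)
  finally show ?thesis .
qed

lemma smul_zero [simp]: "smul A c (zero A) = zero A"
  by (metis add_left_cancel add_zero_right smul_add_distrib smul_closed zero_closed)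

lemma smul_zero_left [simp]: "x \<in> carrier A \<Longrightarrow> smul A 0 x = zero A"
  by (metis add_0 add_left_cancel add_smul_distrib add_zero_right smul_closed zero_closed)

lemma smul_eq_zeroD:
  assumes "c \<noteq> 0" "x \<in> carrier A" "smul A c x = zero A"
  shows "x = zero A"
proof -
  have "x = smul A (inverse c) (smul A c x)" using assms(1,2) by simp
  then show ?thesis using assms(3) by simp
qed

lemma smul_minus_one: "x \<in> carrier A \<Longrightarrow> smul A (-1) x = neg A x"
  by (metis add_left_cancel add_neg_left add_smul_distrib add_commute neg_closed smul_closed
      smul_one smul_zero_left add.right_inverse)

lemma mul_zero_left [simp]: "x \<in> carrier A \<Longrightarrow> mul A (zero A) x = zero A"
  by (metis add_left_cancel add_zero_right distrib_right mul_closed zero_closed)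

lemma mul_zero_right [simp]: "x \<in> carrier A \<Longrightarrow> mul A x (zero A) = zero A"
  by (metis add_left_cancel add_zero_right distrib_left mul_closed zero_closed)

lemma add_self_eq_smul_two: "x \<in> carrier A \<Longrightarrow> add A x x = smul A 2 x"
  by (metis add_smul_distrib one_add_one smul_one)

lemma neg_add: "x \<in> carrier A \<Longrightarrow> y \<in> carrier A \<Longrightarrow> neg A (add A x y) = add A (neg A x) (neg A y)"
  by (metis smul_add_distrib smul_minus_one add_closed)

lemma add_add_swap:
  "a \<in> carrier A \<Longrightarrow> b \<in> carrier A \<Longrightarrow> m \<in> carrier A \<Longrightarrow> n \<in> carrier A \<Longrightarrow>
    add A (add A a m) (add A b n) = add A (add A a b) (add A m n)"
  by (metis add_assoc add_closed add_commute)

subsection \<open>Ideals\<close>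

lemma ideal_subset: "ideal A I \<Longrightarrow> x \<in> I \<Longrightarrow> x \<in> carrier A"
  and ideal_zero: "ideal A I \<Longrightarrow> zero A \<in> I"
  and ideal_add: "ideal A I \<Longrightarrow> x \<in> I \<Longrightarrow> y \<in> I \<Longrightarrow> add A x y \<in> I"
  and ideal_smul: "ideal A I \<Longrightarrow> x \<in> I \<Longrightarrow> smul A c x \<in> I"
  and ideal_mul_right: "ideal A I \<Longrightarrow> x \<in> I \<Longrightarrow> y \<in> carrier A \<Longrightarrow> mul A x y \<in> I"
  and ideal_mul_left: "ideal A I \<Longrightarrow> x \<in> I \<Longrightarrow> y \<in> carrier A \<Longrightarrow> mul A y x \<in> I"
  unfolding ideal_def by blast+

lemma ideal_neg: "ideal A I \<Longrightarrow> x \<in> I \<Longrightarrow> neg A x \<in> I"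
  by (metis ideal_smul ideal_subset smul_minus_one)

lemma ideal_add_cancel_left:
  assumes "ideal A I" "x \<in> I" "y \<in> carrier A" "add A x y \<in> I"
  shows "y \<in> I"
proof -
  have "y = add A (neg A x) (add A x y)"
    using assms ideal_subset by (simp flip: add_assoc)
  then show ?thesis using assms ideal_add ideal_neg by metis
qed

lemma one_not_in_proper_ideal:
  assumes unit: "\<forall>x\<in>carrier A. mul A (one A) x = x"
    and I: "ideal A I" "I \<noteq> carrier A"
  shows "one A \<notin> I"
proof
  assume "one A \<in> I"
  have "mul A (one A) x \<in> I" if "x \<in> carrier A" for x
    using I(1) \<open>one A \<in> I\<close> that by (rule ideal_mul_right)
  then have "carrier A \<subseteq> I" using unit by auto
  then show False using I ideal_subset by blast
qed

lemma invertible_not_in_proper_ideal: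
  assumes unit: "\<forall>x\<in>carrier A. mul A (one A) x = x"
    and I: "ideal A I" "I \<noteq> carrier A" and "invertible A u"
  shows "u \<notin> I"
proof
  assume "u \<in> I"
  obtain v where "v \<in> carrier A" "mul A u v = one A"
    using \<open>invertible A u\<close> unfolding invertible_def by blast
  then have "one A \<in> I" using I(1) \<open>u \<in> I\<close> ideal_mul_right by metis
  then show False using one_not_in_proper_ideal[OF unit I] by blast
qed

lemma ideal_sum_closed:
  assumes "\<forall>I\<in>S. ideal A I" "x \<in> ideal_sum A S"
  shows "x \<in> carrier A"
  using assms(2) by induct (use assms(1) ideal_subset in auto)

lemma ideal_sum_upper: "I \<in> S \<Longrightarrow> ideal A I \<Longrightarrow> I \<subseteq> ideal_sum A S"
  by (metis add_zero_right ideal_subset ideal_sum.add_in ideal_sum.zero_in subsetI)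

lemma ideal_sum_least:
  assumes "\<forall>I\<in>S. I \<subseteq> K" "zero A \<in> K" "\<forall>x\<in>K. \<forall>y\<in>K. add A x y \<in> K"
  shows "ideal_sum A S \<subseteq> K"
proof
  show "x \<in> K" if "x \<in> ideal_sum A S" for x
    using that by induct (use assms in auto)
qed

lemma ideal_ideal_sum:
  assumes ideals: "\<forall>I\<in>S. ideal A I"
  shows "ideal A (ideal_sum A S)"
proof -
  let ?M = "ideal_sum A S"
  have closed: "x \<in> carrier A" if "x \<in> ?M" for x
    using ideal_sum_closed ideals that .
  have summand_closed: "u \<in> carrier A" if "I \<in> S" "u \<in> I" for I u
    using ideals ideal_subset that by blast
  have add: "add A x y \<in> ?M" if "x \<in> ?M" "y \<in> ?M" for x y
    using that(1)
  proof induct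
    case (add_in I u v)
    then have "add A (add A u v) y = add A u (add A v y)"
      using summand_closed closed that(2) by (simp add: add_assoc)
    then show ?case using add_in ideal_sum.add_in by metis
  qed (use closed that(2) in simp)
  have smul: "smul A c x \<in> ?M" if "x \<in> ?M" for c x
    using that
  proof induct
    case (add_in I u v)
    then have "smul A c (add A u v) = add A (smul A c u) (smul A c v)"
      using summand_closed closed by (simp add: smul_add_distrib)
    then show ?case using add_in ideals ideal_smul ideal_sum.add_in by metis
  qed (simp add: ideal_sum.zero_in)
  have mul: "mul A x y \<in> ?M \<and> mul A y x \<in> ?M" if "x \<in> ?M" "y \<in> carrier A" for x y
    using that(1)
  proof induct
    case (add_in I u v)
    then have "mul A (add A u v) y = add A (mul A u y) (mul A v y)"
      and "mul A y (add A u v) = add A (mul A y u) (mul A y v)"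
      using summand_closed closed that(2) by (simp_all add: distrib_left distrib_right)
    then show ?case
      using add_in ideals that(2) ideal_mul_left ideal_mul_right ideal_sum.add_in by metis
  qed (use that(2) ideal_sum.zero_in mul_zero_left mul_zero_right in simp)
  show ?thesis
    unfolding ideal_def using closed add smul mul ideal_sum.zero_in by blast
qed

subsection \<open>Derivations with invertible values\<close>

lemma derivation_closed: "derivation A d \<Longrightarrow> x \<in> carrier A \<Longrightarrow> d x \<in> carrier A"
  and derivation_add: "derivation A d \<Longrightarrow> x \<in> carrier A \<Longrightarrow> y \<in> carrier A \<Longrightarrow>
    d (add A x y) = add A (d x) (d y)"
  and derivation_smul: "derivation A d \<Longrightarrow> x \<in> carrier A \<Longrightarrow> d (smul A c x) = smul A c (d x)"
  and derivation_mul: "derivation A d \<Longrightarrow> x \<in> carrier A \<Longrightarrow> y \<in> carrier A \<Longrightarrow>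
    d (mul A x y) = add A (mul A (d x) y) (mul A x (d y))"
  unfolding derivation_def by blast+

lemma derivation_zero: "derivation A d \<Longrightarrow> d (zero A) = zero A"
  by (metis add_left_cancel add_zero_left add_zero_right derivation_add derivation_closed zero_closed)

lemma zero_mem_ker: "derivation A d \<Longrightarrow> zero A \<in> ker A d"
  unfolding ker_def using derivation_zero by simp

lemma add_mem_ker: "derivation A d \<Longrightarrow> x \<in> ker A d \<Longrightarrow> y \<in> ker A d \<Longrightarrow> add A x y \<in> ker A d"
  using derivation_add[of d x y] by (simp add: ker_def)

lemma derivation_vanishes_on_proper_ideal:
  assumes comm: "\<forall>x\<in>carrier A. \<forall>y\<in>carrier A. mul A x y = mul A y x"
    and unit: "\<forall>x\<in>carrier A. mul A (one A) x = x"
    and der: "derivation A d"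
    and inv_values: "\<forall>x\<in>carrier A. invertible A (d x) \<or> d x = zero A"
    and two: "(2::'f) \<noteq> 0"
    and I: "ideal A I" "I \<noteq> carrier A" and "x \<in> I"
  shows "d x = zero A"
proof (rule ccontr)
  assume "d x \<noteq> zero A"
  define a where "a = d x"
  have x: "x \<in> carrier A" using I \<open>x \<in> I\<close> ideal_subset by blast
  have a: "a \<in> carrier A" unfolding a_def using der x by (rule derivation_closed)
  have vanishes_in_I: "d y = zero A" if "y \<in> carrier A" "d y \<in> I" for y
    using inv_values invertible_not_in_proper_ideal[OF unit I] that by blast
  have "d (mul A x x) = add A (mul A x a) (mul A x a)"
    using derivation_mul[OF der x x] comm[rule_format, OF a x] unfolding a_def by simp
  also have "\<dots> = smul A 2 (mul A x a)" using x a by (simp add: add_self_eq_smul_two)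
  finally have "smul A 2 (mul A x a) = zero A"
    using vanishes_in_I[of "mul A x x"] ideal_smul[OF I(1) ideal_mul_right[OF I(1) \<open>x \<in> I\<close> a]] x
    by simp
  then have "mul A x a = zero A" using two x a by (simp add: smul_eq_zeroD)
  then have "mul A a x = zero A" using comm[rule_format, OF a x] by simp
  then have "add A (mul A (d a) x) (mul A a a) = zero A"
    using derivation_mul[OF der a x] derivation_zero[OF der] unfolding a_def by simp
  then have "mul A a a \<in> I"
    using ideal_add_cancel_left[OF I(1) ideal_mul_left[OF I(1) \<open>x \<in> I\<close>]] ideal_zero[OF I(1)]
      derivation_closed[OF der a] a by simp
  moreover obtain y where "y \<in> carrier A" "mul A (mul A a a) y = a"
    using \<open>d x \<noteq> zero A\<close> inv_values x unfolding a_def invertible_def by blast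
  ultimately have "a \<in> I" using ideal_mul_right[OF I(1)] by metis
  then show False using vanishes_in_I[OF x] \<open>d x \<noteq> zero A\<close> unfolding a_def by simp
qed

lemma ideal_sum_ker_subset_ker:
  "derivation A d \<Longrightarrow> ideal_sum A {I. ideal A I \<and> I \<subseteq> ker A d} \<subseteq> ker A d"
  using zero_mem_ker add_mem_ker by (intro ideal_sum_least) blast+

lemma proper_ideal_subset_ideal_sum_ker:
  assumes "\<forall>x\<in>carrier A. \<forall>y\<in>carrier A. mul A x y = mul A y x"
    and "\<forall>x\<in>carrier A. mul A (one A) x = x"
    and "derivation A d"
    and "\<forall>x\<in>carrier A. invertible A (d x) \<or> d x = zero A"
    and "(2::'f) \<noteq> 0"
    and I: "ideal A I" "I \<noteq> carrier A"
  shows "I \<subseteq> ideal_sum A {I. ideal A I \<and> I \<subseteq> ker A d}"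
proof -
  have "I \<subseteq> ker A d"
    using derivation_vanishes_on_proper_ideal[OF assms] ideal_subset[OF I(1)] unfolding ker_def by blast
  then show ?thesis using I(1) by (intro ideal_sum_upper) auto
qed

end

subsection \<open>Quotient algebras\<close>

locale quotient_algebra = nonassoc_algebra A for A :: "('f::field, 'a) alg" +
  fixes M :: "'a set"
  assumes ideal_M: "ideal A M"
begin

lemma M_closed: "m \<in> M \<Longrightarrow> m \<in> carrier A"
  using ideal_M ideal_subset by blast

lemma mem_coset_iff: "x \<in> coset A M a \<longleftrightarrow> (\<exists>m\<in>M. x = add A a m)"
  unfolding coset_def by blast

lemma coset_add_ideal:
  assumes a: "a \<in> carrier A" and m: "m \<in> M"
  shows "coset A M (add A a m) = coset A M a"
proof (intro set_eqI iffI)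
  fix x assume "x \<in> coset A M (add A a m)"
  then obtain n where n: "n \<in> M" and x: "x = add A (add A a m) n"
    by (auto simp: mem_coset_iff)
  have "x = add A a (add A m n)" using x a M_closed[OF m] M_closed[OF n] by (simp add: add_assoc)
  moreover have "add A m n \<in> M" using ideal_M m n by (rule ideal_add)
  ultimately show "x \<in> coset A M a" by (auto simp: mem_coset_iff)
next
  fix x assume "x \<in> coset A M a"
  then obtain n where n: "n \<in> M" and x: "x = add A a n"
    by (auto simp: mem_coset_iff)
  have m': "m \<in> carrier A" and n': "n \<in> carrier A" using m n by (simp_all add: M_closed)
  have "add A (add A a m) (add A (neg A m) n) = add A a (add A (add A m (neg A m)) n)"
    using a m' n' by (simp add: add_assoc del: add_neg_right)
  also have "\<dots> = x" using x n' m' by simp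
  finally have "x = add A (add A a m) (add A (neg A m) n)" ..
  moreover have "add A (neg A m) n \<in> M" using ideal_M ideal_neg[OF ideal_M m] n by (rule ideal_add)
  ultimately show "x \<in> coset A M (add A a m)" by (auto simp: mem_coset_iff)
qed

lemma self_mem_coset: "a \<in> carrier A \<Longrightarrow> a \<in> coset A M a"
  using ideal_M ideal_zero by (force simp: mem_coset_iff)

lemma coset_eq_iff: "a \<in> carrier A \<Longrightarrow> b \<in> carrier A \<Longrightarrow> coset A M a = coset A M b \<longleftrightarrow> b \<in> coset A M a"
  using self_mem_coset coset_add_ideal by (auto simp: mem_coset_iff)

lemma coset_eq_zero_iff: "a \<in> carrier A \<Longrightarrow> coset A M a = coset A M (zero A) \<longleftrightarrow> a \<in> M"
  using coset_eq_iff[of "zero A" a] M_closed by (auto simp: mem_coset_iff)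

lemma rep_coset:
  assumes "a \<in> carrier A"
  obtains m where "m \<in> M" "rep (coset A M a) = add A a m"
  using someI[of "\<lambda>x. x \<in> coset A M a", OF self_mem_coset[OF assms]]
  unfolding rep_def mem_coset_iff by blast

lemma quot_carrier [simp]: "carrier (quot_alg A M) = coset A M ` carrier A"
  and quot_zero [simp]: "zero (quot_alg A M) = coset A M (zero A)"
  and quot_one [simp]: "one (quot_alg A M) = coset A M (one A)"
  unfolding quot_alg_def by simp_all

lemma quot_add [simp]:
  assumes a: "a \<in> carrier A" and b: "b \<in> carrier A"
  shows "add (quot_alg A M) (coset A M a) (coset A M b) = coset A M (add A a b)"
proof -
  obtain m n where m: "m \<in> M" and n: "n \<in> M"
    and reps: "rep (coset A M a) = add A a m" "rep (coset A M b) = add A b n"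
    using rep_coset a b by metis
  have "add A (add A a m) (add A b n) = add A (add A a b) (add A m n)"
    using a b M_closed[OF m] M_closed[OF n] by (rule add_add_swap)
  moreover have "add A m n \<in> M" using ideal_M m n by (rule ideal_add)
  ultimately show ?thesis
    unfolding quot_alg_def using reps coset_add_ideal[OF add_closed[OF a b]] by simp
qed

lemma quot_mul [simp]:
  assumes a: "a \<in> carrier A" and b: "b \<in> carrier A"
  shows "mul (quot_alg A M) (coset A M a) (coset A M b) = coset A M (mul A a b)"
proof -
  obtain m n where m: "m \<in> M" and n: "n \<in> M"
    and reps: "rep (coset A M a) = add A a m" "rep (coset A M b) = add A b n"
    using rep_coset a b by metis
  have m': "m \<in> carrier A" and n': "n \<in> carrier A" using m n by (simp_all add: M_closed)
  have "mul A (add A a m) (add A b n) = add A (mul A a (add A b n)) (mul A m (add A b n))"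
    using a b m' n' by (simp add: distrib_right)
  also have "\<dots> = add A (mul A a b) (add A (mul A a n) (mul A m (add A b n)))"
    using a b m' n' by (simp add: distrib_left add_assoc)
  finally have "mul A (add A a m) (add A b n) =
      add A (mul A a b) (add A (mul A a n) (mul A m (add A b n)))" .
  moreover have "add A (mul A a n) (mul A m (add A b n)) \<in> M"
    using ideal_mul_left[OF ideal_M n a] ideal_mul_right[OF ideal_M m add_closed[OF b n']]
    by (rule ideal_add[OF ideal_M])
  ultimately show ?thesis
    unfolding quot_alg_def using reps coset_add_ideal[OF mul_closed[OF a b]] by simp
qed

lemma quot_smul [simp]:
  assumes a: "a \<in> carrier A"
  shows "smul (quot_alg A M) c (coset A M a) = coset A M (smul A c a)"
proof -
  obtain m where m: "m \<in> M" and rep: "rep (coset A M a) = add A a m"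
    using rep_coset a by metis
  have "smul A c (add A a m) = add A (smul A c a) (smul A c m)"
    using a M_closed[OF m] by (rule smul_add_distrib)
  moreover have "smul A c m \<in> M" using ideal_M m by (rule ideal_smul)
  ultimately show ?thesis
    unfolding quot_alg_def using rep coset_add_ideal[OF smul_closed[OF a]] by simp
qed

lemma quot_neg [simp]:
  assumes a: "a \<in> carrier A"
  shows "neg (quot_alg A M) (coset A M a) = coset A M (neg A a)"
proof -
  obtain m where m: "m \<in> M" and rep: "rep (coset A M a) = add A a m"
    using rep_coset a by metis
  have "neg A (add A a m) = add A (neg A a) (neg A m)"
    using a M_closed[OF m] by (rule neg_add)
  moreover have "neg A m \<in> M" using ideal_M m by (rule ideal_neg)
  ultimately show ?thesis
    unfolding quot_alg_def using rep coset_add_ideal[OF neg_closed[OF a]] by simp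
qed

lemma algebra_over_quot_alg: "algebra_over (quot_alg A M)"
  unfolding algebra_over_def quot_carrier ball_simps
  by (intro conjI; simp add: add_assoc smul_add_distrib add_smul_distrib distrib_left
      distrib_right mul_smul_left mul_smul_right) (metis add_commute)

lemma unital_jordan_algebra_quot_alg:
  assumes "unital_jordan_algebra A"
  shows "unital_jordan_algebra (quot_alg A M)"
proof -
  let ?Q = "quot_alg A M"
  have comm: "\<forall>x\<in>carrier A. \<forall>y\<in>carrier A. mul A x y = mul A y x"
    and jordan: "\<forall>x\<in>carrier A. \<forall>y\<in>carrier A.
      mul A (mul A (mul A x x) y) x = mul A (mul A x x) (mul A y x)"
    and unit: "\<forall>x\<in>carrier A. mul A (one A) x = x"
    using assms unfolding unital_jordan_algebra_def by blast+
  have "\<forall>X\<in>carrier ?Q. \<forall>Y\<in>carrier ?Q. mul ?Q X Y = mul ?Q Y X"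
    using comm by simp
  moreover have "\<forall>X\<in>carrier ?Q. \<forall>Y\<in>carrier ?Q.
      mul ?Q (mul ?Q (mul ?Q X X) Y) X = mul ?Q (mul ?Q X X) (mul ?Q Y X)"
    using jordan by simp
  moreover have "\<forall>X\<in>carrier ?Q. mul ?Q (one ?Q) X = X"
    using unit by simp
  ultimately show ?thesis
    unfolding unital_jordan_algebra_def using algebra_over_quot_alg by blast
qed

lemma invertible_coset:
  assumes "invertible A x"
  shows "invertible (quot_alg A M) (coset A M x)"
proof -
  obtain y where "x \<in> carrier A" "y \<in> carrier A" "mul A x y = one A" "mul A (mul A x x) y = x"
    using assms unfolding invertible_def by blast
  then show ?thesis
    unfolding invertible_def quot_carrier by (auto intro!: bexI[of _ y])
qed

lemma ideal_preimage:
  assumes K: "ideal (quot_alg A M) K"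
  shows "ideal A {a \<in> carrier A. coset A M a \<in> K}"
proof -
  let ?Q = "quot_alg A M"
  have "add ?Q X Y \<in> K" if "X \<in> K" "Y \<in> K" for X Y
    using K that unfolding ideal_def by blast
  moreover have "smul ?Q c X \<in> K" if "X \<in> K" for c X
    using K that unfolding ideal_def by blast
  moreover have "mul ?Q X Z \<in> K \<and> mul ?Q Z X \<in> K" if "X \<in> K" "Z \<in> carrier ?Q" for X Z
    using K that unfolding ideal_def by blast
  moreover have "coset A M (zero A) \<in> K"
    using K unfolding ideal_def by simp
  ultimately show ?thesis
    unfolding ideal_def by (auto simp flip: quot_add quot_smul quot_mul)
qed

lemma simple_quot_alg:
  assumes unit: "\<forall>x\<in>carrier A. mul A (one A) x = x"
    and proper: "M \<noteq> carrier A"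
    and largest: "\<forall>I. ideal A I \<and> I \<noteq> carrier A \<longrightarrow> I \<subseteq> M"
  shows "simple_algebra (quot_alg A M)"
  unfolding simple_algebra_def
proof (intro conjI allI impI)
  have "one A \<notin> M" using unit ideal_M proper by (rule one_not_in_proper_ideal)
  then have "coset A M (one A) \<noteq> coset A M (zero A)" by (simp add: coset_eq_zero_iff)
  moreover have "coset A M (one A) \<in> carrier (quot_alg A M)" by simp
  ultimately show "carrier (quot_alg A M) \<noteq> {zero (quot_alg A M)}" by auto
next
  fix K assume K: "ideal (quot_alg A M) K"
  let ?I = "{a \<in> carrier A. coset A M a \<in> K}"
  have K_sub: "K \<subseteq> coset A M ` carrier A"
    using K unfolding ideal_def by simp
  show "K = {zero (quot_alg A M)} \<or> K = carrier (quot_alg A M)"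
  proof (cases "?I = carrier A")
    case True
    then show ?thesis using K_sub by auto
  next
    case False
    then have "?I \<subseteq> M" using largest ideal_preimage[OF K] by blast
    then have "K \<subseteq> {coset A M (zero A)}" using K_sub coset_eq_zero_iff by blast
    then show ?thesis using K unfolding ideal_def by auto
  qed
qed

lemma derivation_coset_cong:
  assumes "derivation A d" "M \<subseteq> ker A d" "a \<in> carrier A" "x \<in> coset A M a"
  shows "d x = d a"
  using assms derivation_add derivation_closed M_closed unfolding ker_def mem_coset_iff
  by fastforce

lemma quot_map_coset:
  assumes "derivation A d" "M \<subseteq> ker A d" "a \<in> carrier A"
  shows "quot_map A M d (coset A M a) = coset A M (d a)"
proof -
  obtain m where "m \<in> M" and rep: "rep (coset A M a) = add A a m"
    using rep_coset assms(3) by metis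
  then have "add A a m \<in> coset A M a" by (auto simp: mem_coset_iff)
  then show ?thesis
    unfolding quot_map_def rep using derivation_coset_cong[OF assms] by simp
qed

lemma derivation_inv_values_quot_map:
  assumes unit: "\<forall>x\<in>carrier A. mul A (one A) x = x"
    and d: "derivation_inv_values A d"
    and M: "M \<subseteq> ker A d" "M \<noteq> carrier A"
  shows "derivation_inv_values (quot_alg A M) (quot_map A M d)"
proof -
  have der: "derivation A d" using d unfolding derivation_inv_values_def by blast
  note quot_map = quot_map_coset[OF der M(1)]
  have "derivation (quot_alg A M) (quot_map A M d)"
    unfolding derivation_def quot_carrier ball_simps
    using quot_map derivation_closed[OF der] derivation_add[OF der] derivation_smul[OF der]
      derivation_mul[OF der] by simp
  moreover obtain x where x: "x \<in> carrier A" "d x \<noteq> zero A"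
    using d unfolding derivation_inv_values_def by blast
  then have "d x \<notin> M"
    using d invertible_not_in_proper_ideal[OF unit ideal_M M(2)] unfolding derivation_inv_values_def
    by blast
  then have "\<exists>X\<in>carrier (quot_alg A M). quot_map A M d X \<noteq> zero (quot_alg A M)"
    using x quot_map coset_eq_zero_iff derivation_closed[OF der] by force
  moreover have "invertible (quot_alg A M) (quot_map A M d X) \<or> quot_map A M d X = zero (quot_alg A M)"
    if "X \<in> carrier (quot_alg A M)" for X
    using that d quot_map invertible_coset unfolding derivation_inv_values_def by auto
  ultimately show ?thesis unfolding derivation_inv_values_def by blast
qed

end

theorem mainTheorem4:
  fixes J :: "('f::field, 'a) alg" and d :: "'a \<Rightarrow> 'a"
  assumes "unital_jordan_algebra J"
    and "(2::'f) \<noteq> 0" and "(3::'f) \<noteq> 0"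
    and "derivation_inv_values J d"
  defines "M \<equiv> ideal_sum J {I. ideal J I \<and> I \<subseteq> ker J d}"
  shows "ideal J M \<and> M \<noteq> carrier J \<and>
         (\<forall>I. ideal J I \<and> I \<noteq> carrier J \<longrightarrow> I \<subseteq> M) \<and>
         (\<forall>x\<in>carrier J. \<forall>y\<in>carrier J. coset J M x = coset J M y \<longrightarrow>
           coset J M (d x) = coset J M (d y)) \<and>
         (\<forall>x\<in>carrier J. quot_map J M d (coset J M x) = coset J M (d x)) \<and>
         derivation_inv_values (quot_alg J M) (quot_map J M d) \<and>
         unital_jordan_algebra (quot_alg J M) \<and> simple_algebra (quot_alg J M)"
proof -
  have comm: "\<forall>x\<in>carrier J. \<forall>y\<in>carrier J. mul J x y = mul J y x"
    and unit: "\<forall>x\<in>carrier J. mul J (one J) x = x"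
    and "algebra_over J"
    using assms(1) unfolding unital_jordan_algebra_def by blast+
  interpret nonassoc_algebra J by unfold_locales fact
  have der: "derivation J d" and "\<exists>x\<in>carrier J. d x \<noteq> zero J"
    and inv_values: "\<forall>x\<in>carrier J. invertible J (d x) \<or> d x = zero J"
    using assms(4) unfolding derivation_inv_values_def by blast+
  have ideal: "ideal J M"
    unfolding M_def by (rule ideal_ideal_sum) blast
  have M_ker: "M \<subseteq> ker J d"
    unfolding M_def using der by (rule ideal_sum_ker_subset_ker)
  then have proper: "M \<noteq> carrier J"
    using \<open>\<exists>x\<in>carrier J. d x \<noteq> zero J\<close> unfolding ker_def by blast
  have largest: "\<forall>I. ideal J I \<and> I \<noteq> carrier J \<longrightarrow> I \<subseteq> M"
    unfolding M_def using proper_ideal_subset_ideal_sum_ker[OF comm unit der inv_values assms(2)] by blast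
  interpret quotient_algebra J M by unfold_locales (fact ideal)
  have "coset J M (d x) = coset J M (d y)"
    if "x \<in> carrier J" "y \<in> carrier J" "coset J M x = coset J M y" for x y
    using that coset_eq_iff derivation_coset_cong[OF der M_ker] by simp
  then show ?thesis
    using ideal proper largest quot_map_coset[OF der M_ker]
      derivation_inv_values_quot_map[OF unit assms(4) M_ker proper]
      unital_jordan_algebra_quot_alg[OF assms(1)] simple_quot_alg[OF unit proper largest]
    by blast
qed

end
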